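(* Let $L$ be a Lie algebra over a field $K$ of characteristic different from $2$ and $3$, and let $I$ be an ideal of $L$ of codimension $1$ which is perfect, i.e. $[I,I]=I$. Then there is an injective linear map $Z^2_{comm}(L)\to Z^2_{comm}(I)\oplus K$, where the summand $K$ corresponds to the trivial cocycle $\varphi$ defined by $\varphi(x,x)=1$, $\varphi(I,I)=\varphi(I,x)=0$ for a fixed $x\in L\setminus I$.
   Context: $Z^2_{comm}(L)$ is the space of symmetric bilinear forms $\varphi:L\times L\to K$ with $\varphi([x,y],z)+\varphi([z,x],y)+\varphi([y,z],x)=0$ for all $x,y,z\in L$. *)

theory Defs
  imports Complex_Main
begin

definition lie_algebra :: "('k::field \<Rightarrow> 'v::ab_group_add \<Rightarrow> 'v) \<Rightarrow> ('v \<Rightarrow> 'v \<Rightarrow> 'v) \<Rightarrow> bool" where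
  "lie_algebra sc br \<longleftrightarrow> vector_space sc
     \<and> (\<forall>x y z. br (x + y) z = br x z + br y z)
     \<and> (\<forall>x y z. br x (y + z) = br x y + br x z)
     \<and> (\<forall>c x y. br (sc c x) y = sc c (br x y))
     \<and> (\<forall>c x y. br x (sc c y) = sc c (br x y))
     \<and> (\<forall>x. br x x = 0)
     \<and> (\<forall>x y z. br x (br y z) + br y (br z x) + br z (br x y) = 0)"

definition lie_ideal :: "('k::field \<Rightarrow> 'v::ab_group_add \<Rightarrow> 'v) \<Rightarrow> ('v \<Rightarrow> 'v \<Rightarrow> 'v) \<Rightarrow> 'v set \<Rightarrow> bool" where
  "lie_ideal sc br I \<longleftrightarrow> module.subspace sc I \<and> (\<forall>x y. y \<in> I \<longrightarrow> br x y \<in> I)"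

definition codim_one :: "('k::field \<Rightarrow> 'v::ab_group_add \<Rightarrow> 'v) \<Rightarrow> 'v set \<Rightarrow> bool" where
  "codim_one sc I \<longleftrightarrow> (\<exists>x. x \<notin> I \<and> (\<forall>v. \<exists>i\<in>I. \<exists>c. v = i + sc c x))"

definition perfect :: "('k::field \<Rightarrow> 'v::ab_group_add \<Rightarrow> 'v) \<Rightarrow> ('v \<Rightarrow> 'v \<Rightarrow> 'v) \<Rightarrow> 'v set \<Rightarrow> bool" where
  "perfect sc br I \<longleftrightarrow> module.span sc {br a b | a b. a \<in> I \<and> b \<in> I} = I"

text \<open>Z^2_comm of the Lie algebra S (S = UNIV for L, S = I for an ideal):
symmetric bilinear forms on S satisfying the cyclic condition; for definiteness
the form is required to vanish outside S \<times> S, so forms on I are determined by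
their values on I \<times> I.\<close>
definition Z2comm :: "('k::field \<Rightarrow> 'v::ab_group_add \<Rightarrow> 'v) \<Rightarrow> ('v \<Rightarrow> 'v \<Rightarrow> 'v) \<Rightarrow> 'v set \<Rightarrow> ('v \<Rightarrow> 'v \<Rightarrow> 'k) set" where
  "Z2comm sc br S = {\<phi>.
     (\<forall>a\<in>S. \<forall>b\<in>S. \<forall>c\<in>S. \<phi> (a + b) c = \<phi> a c + \<phi> b c)
   \<and> (\<forall>t. \<forall>a\<in>S. \<forall>b\<in>S. \<phi> (sc t a) b = t * \<phi> a b)
   \<and> (\<forall>a\<in>S. \<forall>b\<in>S. \<phi> a b = \<phi> b a)
   \<and> (\<forall>x\<in>S. \<forall>y\<in>S. \<forall>z\<in>S. \<phi> (br x y) z + \<phi> (br z x) y + \<phi> (br y z) x = 0)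
   \<and> (\<forall>a b. \<not> (a \<in> S \<and> b \<in> S) \<longrightarrow> \<phi> a b = 0)}"


text \<open>For x \<notin> I with L = I + Kx, the coefficient of v along x, and the trivial
cocycle phi_x with phi_x(x,x) = 1, phi_x(I,I) = phi_x(I,x) = 0, i.e.
phi_x(a,b) = coeff(a) * coeff(b).\<close>
definition x_coeff :: "('k::field \<Rightarrow> 'v::ab_group_add \<Rightarrow> 'v) \<Rightarrow> 'v set \<Rightarrow> 'v \<Rightarrow> 'v \<Rightarrow> 'k" where
  "x_coeff sc I x v = (THE c. v - sc c x \<in> I)"

definition trivial_cocycle :: "('k::field \<Rightarrow> 'v::ab_group_add \<Rightarrow> 'v) \<Rightarrow> 'v set \<Rightarrow> 'v \<Rightarrow> 'v \<Rightarrow> 'v \<Rightarrow> 'k" where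
  "trivial_cocycle sc I x a b = x_coeff sc I x a * x_coeff sc I x b"

end

theory Submission
  imports Defs
begin

text \<open>Fix \<open>x \<notin> I\<close> and send a cocycle \<open>\<phi>\<close> of \<open>L\<close> to its restriction to \<open>I \<times> I\<close>
together with \<open>\<phi>(x,x)\<close>.
For injectivity, let \<open>\<phi>\<close> vanish on \<open>I \<times> I\<close> and at \<open>(x,x)\<close>. The cyclic identity gives
\<open>\<phi>([a,b],x) = -\<phi>([x,a],b) - \<phi>([b,x],a) = 0\<close> for \<open>a, b \<in> I\<close>, since \<open>I\<close> is an ideal;
as \<open>I\<close> is perfect, \<open>\<phi>(I,x) = 0\<close>. Since \<open>L = I + Kx\<close>, bilinearity forces \<open>\<phi> = 0\<close>.\<close>

definition restrict_form :: "'v set \<Rightarrow> ('v \<Rightarrow> 'v \<Rightarrow> 'k::zero) \<Rightarrow> 'v \<Rightarrow> 'v \<Rightarrow> 'k" where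
  "restrict_form S \<phi> a b = (if a \<in> S \<and> b \<in> S then \<phi> a b else 0)"

lemma lie_algebra_module: "lie_algebra sc br \<Longrightarrow> module sc"
  unfolding lie_algebra_def by (simp add: module_iff_vector_space)

lemma lie_algebra_bracket_antisym:
  assumes "lie_algebra sc br"
  shows "br b a = - br a b"
proof -
  have add_left: "\<And>a b c. br (a + b) c = br a c + br b c"
    and add_right: "\<And>a b c. br a (b + c) = br a b + br a c"
    and alt: "\<And>a. br a a = 0"
    using assms unfolding lie_algebra_def by auto
  have "br (a + b) (a + b) = br a a + br b a + (br a b + br b b)"
    by (simp only: add_left add_right)
  then have "br b a + br a b = 0" by (simp add: alt)
  then show ?thesis by (simp add: eq_neg_iff_add_eq_0)
qed

lemma lie_ideal_bracket_left:
  assumes "lie_algebra sc br" and "lie_ideal sc br I" and "a \<in> I"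
  shows "br a b \<in> I"
proof -
  interpret module sc using assms(1) by (rule lie_algebra_module)
  have "br b a \<in> I" and "subspace I" using assms(2,3) unfolding lie_ideal_def by auto
  then show ?thesis
    using lie_algebra_bracket_antisym[OF assms(1), of a b] subspace_neg by fastforce
qed

lemma codim_one_decomp:
  assumes "module sc" and "module.subspace sc I" and "codim_one sc I" and "x \<notin> I"
  shows "\<exists>i\<in>I. \<exists>c. v = i + sc c x"
proof -
  interpret module sc by (rule assms(1))
  obtain x0 where x0: "x0 \<notin> I" and gen: "\<forall>v. \<exists>i\<in>I. \<exists>c. v = i + sc c x0"
    using assms(3) unfolding codim_one_def by blast
  obtain i0 c0 where i0: "i0 \<in> I" and x: "x = i0 + sc c0 x0" using gen by blast
  have "c0 \<noteq> 0" using x i0 assms(4) by auto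
  then have x0_eq: "x0 = sc (inverse c0) (x - i0)"
    using x by (simp add: scale_right_diff_distrib)
  obtain i c where i: "i \<in> I" and v: "v = i + sc c x0" using gen by blast
  have "v = (i - sc (c * inverse c0) i0) + sc (c * inverse c0) x"
    using v x0_eq by (simp add: scale_right_diff_distrib)
  moreover have "i - sc (c * inverse c0) i0 \<in> I"
    using assms(2) i i0 by (simp add: subspace_diff subspace_scale)
  ultimately show ?thesis by blast
qed

lemma x_coeff_eq:
  assumes "module sc" and "module.subspace sc I" and "x \<notin> I" and "v - sc c x \<in> I"
  shows "x_coeff sc I x v = c"
  unfolding x_coeff_def
proof (rule the_equality)
  interpret module sc by (rule assms(1))
  fix d assume "v - sc d x \<in> I"
  then have "(v - sc d x) - (v - sc c x) \<in> I" using assms(2,4) subspace_diff by blast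
  then have dx: "sc (c - d) x \<in> I" by (simp add: scale_left_diff_distrib)
  show "d = c"
  proof (rule ccontr)
    assume "d \<noteq> c"
    then have "sc (inverse (c - d)) (sc (c - d) x) = x" by simp
    then show False using subspace_scale[OF assms(2) dx, of "inverse (c - d)"] assms(3) by simp
  qed
qed (fact assms(4))

lemma trivial_cocycle_restrict_form:
  assumes "module sc" and "module.subspace sc I" and "x \<notin> I"
  shows "restrict_form I (trivial_cocycle sc I x) = (\<lambda>a b. 0)"
    and "trivial_cocycle sc I x x x = 1"
proof -
  interpret module sc by (rule assms(1))
  have "x_coeff sc I x a = 0" if "a \<in> I" for a
    using x_coeff_eq[OF assms, of a 0] that by simp
  then show "restrict_form I (trivial_cocycle sc I x) = (\<lambda>a b. 0)"
    by (auto simp: fun_eq_iff restrict_form_def trivial_cocycle_def)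
  have "x_coeff sc I x x = 1"
    using x_coeff_eq[OF assms, of x 1] subspace_0[OF assms(2)] by simp
  then show "trivial_cocycle sc I x x x = 1" by (simp add: trivial_cocycle_def)
qed

lemma Z2comm_UNIV_D:
  assumes "\<phi> \<in> Z2comm sc br UNIV"
  shows "\<phi> (a + b) c = \<phi> a c + \<phi> b c"
    and "\<phi> (sc t a) b = t * \<phi> a b"
    and "\<phi> a b = \<phi> b a"
    and "\<phi> (br a b) c + \<phi> (br c a) b + \<phi> (br b c) a = 0"
  using assms unfolding Z2comm_def by auto

lemma Z2comm_UNIV_zero_left:
  assumes "\<phi> \<in> Z2comm sc br UNIV"
  shows "\<phi> 0 b = 0"
  using Z2comm_UNIV_D(1)[OF assms, of 0 0 b] by (metis add.right_neutral add_left_cancel)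

lemma Z2comm_UNIV_expand:
  assumes "\<phi> \<in> Z2comm sc br UNIV"
  shows "\<phi> (i + sc c x) (j + sc d x) = \<phi> i j + d * \<phi> i x + c * \<phi> j x + c * d * \<phi> x x"
proof -
  note add = Z2comm_UNIV_D(1)[OF assms] and scale = Z2comm_UNIV_D(2)[OF assms]
    and sym = Z2comm_UNIV_D(3)[OF assms]
  have "\<phi> i (j + sc d x) = \<phi> i j + d * \<phi> i x"
    by (subst sym) (simp add: add scale sym[of j i] sym[of x i])
  moreover have "\<phi> x (j + sc d x) = \<phi> j x + d * \<phi> x x"
    by (subst sym) (simp add: add scale)
  ultimately show ?thesis by (simp add: add scale algebra_simps)
qed

lemma Z2comm_diff:
  assumes "\<phi> \<in> Z2comm sc br S" and "\<psi> \<in> Z2comm sc br S"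
  shows "(\<lambda>a b. \<phi> a b - \<psi> a b) \<in> Z2comm sc br S"
proof -
  have "(\<phi> p1 q1 - \<psi> p1 q1) + (\<phi> p2 q2 - \<psi> p2 q2) + (\<phi> p3 q3 - \<psi> p3 q3) = 0"
    if "\<phi> p1 q1 + \<phi> p2 q2 + \<phi> p3 q3 = 0" and "\<psi> p1 q1 + \<psi> p2 q2 + \<psi> p3 q3 = 0"
    for p1 q1 p2 q2 p3 q3
  proof -
    have "(\<phi> p1 q1 - \<psi> p1 q1) + (\<phi> p2 q2 - \<psi> p2 q2) + (\<phi> p3 q3 - \<psi> p3 q3)
        = (\<phi> p1 q1 + \<phi> p2 q2 + \<phi> p3 q3) - (\<psi> p1 q1 + \<psi> p2 q2 + \<psi> p3 q3)"
      by (simp add: algebra_simps)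
    then show ?thesis using that by simp
  qed
  then show ?thesis
    using assms unfolding Z2comm_def by (simp add: algebra_simps)
qed

lemma Z2comm_restrict_form:
  assumes "lie_algebra sc br" and "lie_ideal sc br I" and "\<phi> \<in> Z2comm sc br UNIV"
  shows "restrict_form I \<phi> \<in> Z2comm sc br I"
proof -
  interpret module sc using assms(1) by (rule lie_algebra_module)
  show ?thesis
    using assms subspace_add subspace_scale
    unfolding Z2comm_def restrict_form_def lie_ideal_def by auto
qed

lemma Z2comm_zero_on_ideal_imp_zero_on_ideal_left:
  assumes "lie_algebra sc br" and "lie_ideal sc br I" and "perfect sc br I"
    and "\<phi> \<in> Z2comm sc br UNIV" and "\<forall>a\<in>I. \<forall>b\<in>I. \<phi> a b = 0" and "i \<in> I"
  shows "\<phi> i x = 0"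
proof -
  interpret module sc using assms(1) by (rule lie_algebra_module)
  define S where "S = {v. \<phi> v x = 0}"
  have "subspace S"
    unfolding subspace_def S_def
    by (simp add: Z2comm_UNIV_zero_left[OF assms(4)] Z2comm_UNIV_D(1,2)[OF assms(4)])
  moreover have "{br a b | a b. a \<in> I \<and> b \<in> I} \<subseteq> S"
  proof clarify
    fix a b assume a: "a \<in> I" and b: "b \<in> I"
    have "br x a \<in> I" and "br b x \<in> I"
      using assms(2) a lie_ideal_bracket_left[OF assms(1,2) b] unfolding lie_ideal_def by auto
    then show "br a b \<in> S"
      using Z2comm_UNIV_D(4)[OF assms(4), of a b x] assms(5) a b unfolding S_def by simp
  qed
  ultimately have "span {br a b | a b. a \<in> I \<and> b \<in> I} \<subseteq> S" by (rule span_minimal[rotated])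
  then show ?thesis using assms(3,6) unfolding perfect_def S_def by auto
qed

lemma Z2comm_eq_zero_if_vanishes_on_ideal:
  assumes "lie_algebra sc br" and "lie_ideal sc br I" and "codim_one sc I" and "perfect sc br I"
    and "x \<notin> I" and "\<phi> \<in> Z2comm sc br UNIV"
    and "restrict_form I \<phi> = (\<lambda>a b. 0)" and "\<phi> x x = 0"
  shows "\<phi> = (\<lambda>a b. 0)"
proof (intro ext)
  fix v w
  have module: "module sc" and subspace: "module.subspace sc I"
    using assms(1,2) lie_algebra_module unfolding lie_ideal_def by auto
  have on_I: "\<forall>a\<in>I. \<forall>b\<in>I. \<phi> a b = 0"
    using assms(7) by (metis restrict_form_def)
  obtain i c j d where "i \<in> I" "j \<in> I" and "v = i + sc c x" and "w = j + sc d x"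
    using codim_one_decomp[OF module subspace assms(3,5)] by metis
  then show "\<phi> v w = 0"
    using Z2comm_UNIV_expand[OF assms(6)] on_I assms(8)
      Z2comm_zero_on_ideal_imp_zero_on_ideal_left[OF assms(1,2,4,6) on_I] by simp
qed

lemma inj_on_restrict_form_and_value:
  assumes "lie_algebra sc br" and "lie_ideal sc br I" and "codim_one sc I" and "perfect sc br I"
    and "x \<notin> I"
  shows "inj_on (\<lambda>\<phi>. (restrict_form I \<phi>, \<phi> x x)) (Z2comm sc br UNIV)"
proof (rule inj_onI)
  fix \<phi> \<psi> assume \<phi>: "\<phi> \<in> Z2comm sc br UNIV" and \<psi>: "\<psi> \<in> Z2comm sc br UNIV"
    and "(restrict_form I \<phi>, \<phi> x x) = (restrict_form I \<psi>, \<psi> x x)"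
  then have "restrict_form I \<phi> = restrict_form I \<psi>" and "\<phi> x x - \<psi> x x = 0"
    by simp_all
  moreover have "restrict_form I (\<lambda>a b. \<phi> a b - \<psi> a b) a b
      = restrict_form I \<phi> a b - restrict_form I \<psi> a b" for a b
    by (simp add: restrict_form_def)
  ultimately have "restrict_form I (\<lambda>a b. \<phi> a b - \<psi> a b) = (\<lambda>a b. 0)"
    and "\<phi> x x - \<psi> x x = 0"
    by auto
  then have "(\<lambda>a b. \<phi> a b - \<psi> a b) = (\<lambda>a b. 0)"
    using Z2comm_eq_zero_if_vanishes_on_ideal[OF assms Z2comm_diff[OF \<phi> \<psi>]] by blast
  then show "\<phi> = \<psi>" by (simp add: fun_eq_iff)
qed

theorem lemma5p2:
  fixes sc :: "'k::field \<Rightarrow> 'v::ab_group_add \<Rightarrow> 'v"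
    and br :: "'v \<Rightarrow> 'v \<Rightarrow> 'v"
    and I :: "'v set"
  assumes "lie_algebra sc br"
    and "(2::'k) \<noteq> 0" and "(3::'k) \<noteq> 0"
    and "lie_ideal sc br I"
    and "codim_one sc I"
    and "perfect sc br I"
  shows "\<forall>x. x \<notin> I \<longrightarrow>
    (\<exists>T :: ('v \<Rightarrow> 'v \<Rightarrow> 'k) \<Rightarrow> ('v \<Rightarrow> 'v \<Rightarrow> 'k) \<times> 'k.
        (\<forall>\<phi>\<in>Z2comm sc br UNIV. T \<phi> \<in> Z2comm sc br I \<times> UNIV)
      \<and> (\<forall>\<phi>\<in>Z2comm sc br UNIV. \<forall>\<psi>\<in>Z2comm sc br UNIV.
            T (\<lambda>a b. \<phi> a b + \<psi> a b) =
              ((\<lambda>a b. fst (T \<phi>) a b + fst (T \<psi>) a b), snd (T \<phi>) + snd (T \<psi>)))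
      \<and> (\<forall>t. \<forall>\<phi>\<in>Z2comm sc br UNIV.
            T (\<lambda>a b. t * \<phi> a b) = ((\<lambda>a b. t * fst (T \<phi>) a b), t * snd (T \<phi>)))
      \<and> inj_on T (Z2comm sc br UNIV)
      \<and> T (trivial_cocycle sc I x) = ((\<lambda>a b. 0), 1))"
  apply (intro allI impI)
  subgoal premises x for x
    using inj_on_restrict_form_and_value[OF assms(1,4,5,6) x]
      trivial_cocycle_restrict_form[OF lie_algebra_module[OF assms(1)] _ x]
      Z2comm_restrict_form[OF assms(1,4)] assms(4)
    by (intro exI[of _ "\<lambda>\<phi>. (restrict_form I \<phi>, \<phi> x x)"] conjI)
      (auto simp: restrict_form_def fun_eq_iff lie_ideal_def)
  done

end
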